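(* In the setting described in the context, for every $i$ and every $z\in E_i$, writing $f=f_i=(f_1,f_2)$ and evaluating partial derivatives at $z$, $$\frac{|f_{1y}(z)|}{|f_{1x}(z)|}\le\alpha,\qquad \frac{|f_{2x}(z)|}{|f_{1x}(z)|}\le\alpha,\qquad \frac{|f_{2y}(z)|}{|f_{1x}(z)|}\le\frac1{K_0^2}+\alpha^2.$$
   Context: Let $Q=[0,1]^2$; fix $0<\alpha<1$, $K_0>1$. Let $E_1,E_2,\dots$ be closed curvilinear rectangles in $Q$, each bounded above and below by subintervals of $\{y=1\}$, $\{y=0\}$ and on the left and right by graphs $x=x^{(i)}(y)$ with $|dx^{(i)}/dy|\le\alpha$. Each $f_i=(f_{i1},f_{i2})$ is a $C^2$ diffeomorphism defined near $E_i$ mapping $E_i$ onto a full-width strip $S_i\subset Q$. For every $i$ and $z\in E_i$, $G=f_i$ satisfies at $z$ (with $J_G=|G_{1x}G_{2y}-G_{1y}G_{2x}|$): (H1) $|G_{2x}|+\alpha|G_{2y}|+\alpha^2|G_{1y}|\le\alpha|G_{1x}|$; (H2) $|G_{1x}|-\alpha|G_{1y}|\ge K_0$; (H3) $|G_{1y}|+\alpha|G_{2y}|+\alpha^2|G_{2x}|\le\alpha|G_{1x}|$; (H4) $|G_{1x}|-\alpha|G_{2x}|\ge J_GK_0$. *)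

theory Defs
  imports "HOL-Analysis.Analysis"
begin

definition unitQ :: "(real \<times> real) set" where
  "unitQ = {0..1} \<times> {0..1}"

definition curv_rect :: "real \<Rightarrow> (real \<times> real) set \<Rightarrow> bool" where
  "curv_rect \<alpha> E \<longleftrightarrow> E \<subseteq> unitQ \<and>
     (\<exists>xl xr xl' xr' :: real \<Rightarrow> real.
        (\<forall>y\<in>{0..1}. (xl has_real_derivative xl' y) (at y within {0..1}) \<and> \<bar>xl' y\<bar> \<le> \<alpha>) \<and>
        (\<forall>y\<in>{0..1}. (xr has_real_derivative xr' y) (at y within {0..1}) \<and> \<bar>xr' y\<bar> \<le> \<alpha>) \<and>
        (\<forall>y\<in>{0..1}. xl y < xr y) \<and>
        E = {(x, y). y \<in> {0..1} \<and> xl y \<le> x \<and> x \<le> xr y})"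

definition full_strip :: "(real \<times> real) set \<Rightarrow> bool" where
  "full_strip S \<longleftrightarrow> S \<subseteq> unitQ \<and>
     (\<exists>g1 g2 :: real \<Rightarrow> real. continuous_on {0..1} g1 \<and> continuous_on {0..1} g2 \<and>
        (\<forall>x\<in>{0..1}. g1 x \<le> g2 x) \<and>
        S = {(x, y). x \<in> {0..1} \<and> g1 x \<le> y \<and> y \<le> g2 x})"

definition C2_diffeo_on ::
  "(real \<times> real) set \<Rightarrow> (real \<times> real \<Rightarrow> real \<times> real)
     \<Rightarrow> (real \<times> real \<Rightarrow> (real \<times> real) \<Rightarrow>\<^sub>L (real \<times> real)) \<Rightarrow> bool" where
  "C2_diffeo_on U f Df \<longleftrightarrow> open U \<and>
     (\<forall>z\<in>U. (f has_derivative blinfun_apply (Df z)) (at z)) \<and>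
     (\<exists>D2f. (\<forall>z\<in>U. (Df has_derivative blinfun_apply (D2f z)) (at z)) \<and> continuous_on U D2f) \<and>
     inj_on f U \<and>
     (\<forall>z\<in>U. bij (blinfun_apply (Df z)))"

definition p1x :: "(real \<times> real) \<Rightarrow>\<^sub>L (real \<times> real) \<Rightarrow> real" where
  "p1x L = fst (blinfun_apply L (1, 0))"
definition p1y :: "(real \<times> real) \<Rightarrow>\<^sub>L (real \<times> real) \<Rightarrow> real" where
  "p1y L = fst (blinfun_apply L (0, 1))"
definition p2x :: "(real \<times> real) \<Rightarrow>\<^sub>L (real \<times> real) \<Rightarrow> real" where
  "p2x L = snd (blinfun_apply L (1, 0))"
definition p2y :: "(real \<times> real) \<Rightarrow>\<^sub>L (real \<times> real) \<Rightarrow> real" where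
  "p2y L = snd (blinfun_apply L (0, 1))"

definition jac :: "(real \<times> real) \<Rightarrow>\<^sub>L (real \<times> real) \<Rightarrow> real" where
  "jac L = \<bar>p1x L * p2y L - p1y L * p2x L\<bar>"

text \<open>The cone/expansion hypotheses (H1)-(H4) at a point, for derivative L.\<close>
definition hyp_H :: "real \<Rightarrow> real \<Rightarrow> (real \<times> real) \<Rightarrow>\<^sub>L (real \<times> real) \<Rightarrow> bool" where
  "hyp_H \<alpha> K0 L \<longleftrightarrow>
     \<bar>p2x L\<bar> + \<alpha> * \<bar>p2y L\<bar> + \<alpha>^2 * \<bar>p1y L\<bar> \<le> \<alpha> * \<bar>p1x L\<bar> \<and>
     \<bar>p1x L\<bar> - \<alpha> * \<bar>p1y L\<bar> \<ge> K0 \<and>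
     \<bar>p1y L\<bar> + \<alpha> * \<bar>p2y L\<bar> + \<alpha>^2 * \<bar>p2x L\<bar> \<le> \<alpha> * \<bar>p1x L\<bar> \<and>
     \<bar>p1x L\<bar> - \<alpha> * \<bar>p2x L\<bar> \<ge> jac L * K0"

end

theory Submission
  imports Defs
begin

text \<open>(H1) and (H3) bound the off-diagonal entries by
  \<open>\<alpha> |f\<^sub>1\<^sub>x|\<close>. By (H2), \<open>|f\<^sub>1\<^sub>x| \<ge> K\<^sub>0\<close>, so (H4) bounds the Jacobian by
  \<open>|f\<^sub>1\<^sub>x| / K\<^sub>0 \<le> |f\<^sub>1\<^sub>x|\<^sup>2 / K\<^sub>0\<^sup>2\<close>; since
  \<open>|f\<^sub>1\<^sub>x| |f\<^sub>2\<^sub>y| \<le> J + |f\<^sub>1\<^sub>y| |f\<^sub>2\<^sub>x|\<close>, this gives the bound on \<open>|f\<^sub>2\<^sub>y| / |f\<^sub>1\<^sub>x|\<close>.\<close>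

lemma abs_diag_minus_abs_offdiag_le_jac:
  "\<bar>p1x L\<bar> * \<bar>p2y L\<bar> - \<bar>p1y L\<bar> * \<bar>p2x L\<bar> \<le> jac L"
  unfolding jac_def by (simp add: abs_mult[symmetric])

lemma diag_ratio_le_of_det_bound:
  fixes K \<alpha> a b c d :: real
  assumes "K > 1" "a \<ge> K" "0 \<le> b" "0 \<le> c"
    and det: "K * (a * d - b * c) \<le> a"
    and b: "b \<le> \<alpha> * a" and c: "c \<le> \<alpha> * a"
  shows "d / a \<le> 1 / K^2 + \<alpha>^2"
proof -
  have a_pos: "a > 0" using assms by linarith
  have "a * d - b * c \<le> a / K"
    using det \<open>K > 1\<close> by (simp add: le_divide_eq mult.commute)
  also have "\<dots> = a * K / K^2"
    using \<open>K > 1\<close> by (simp add: power2_eq_square)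
  also have "\<dots> \<le> a * a / K^2"
    using \<open>a \<ge> K\<close> a_pos by (intro divide_right_mono mult_left_mono) auto
  finally have "a * d \<le> a * a / K^2 + b * c" by linarith
  moreover have "b * c \<le> (\<alpha> * a) * (\<alpha> * a)"
    using b c \<open>0 \<le> b\<close> \<open>0 \<le> c\<close> by (intro mult_mono) auto
  ultimately have "a * d \<le> a * (a * (1 / K^2 + \<alpha>^2))"
    by (simp add: algebra_simps power2_eq_square)
  then show ?thesis
    using a_pos by (simp add: divide_le_eq mult.commute)
qed

lemma hyp_H_ratios:
  assumes "0 < \<alpha>" "K0 > 1" and "hyp_H \<alpha> K0 L"
  shows "\<bar>p1y L\<bar> / \<bar>p1x L\<bar> \<le> \<alpha> \<and>
         \<bar>p2x L\<bar> / \<bar>p1x L\<bar> \<le> \<alpha> \<and>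
         \<bar>p2y L\<bar> / \<bar>p1x L\<bar> \<le> 1 / K0^2 + \<alpha>^2"
proof -
  define a b c d where "a = \<bar>p1x L\<bar>" "b = \<bar>p1y L\<bar>" "c = \<bar>p2x L\<bar>" "d = \<bar>p2y L\<bar>"
  have nonneg: "0 \<le> b" "0 \<le> c" "0 \<le> d"
    unfolding a_b_c_d_def by auto
  have H1: "c + \<alpha> * d + \<alpha>^2 * b \<le> \<alpha> * a" and H2: "a - \<alpha> * b \<ge> K0"
    and H3: "b + \<alpha> * d + \<alpha>^2 * c \<le> \<alpha> * a" and H4: "a - \<alpha> * c \<ge> jac L * K0"
    using \<open>hyp_H \<alpha> K0 L\<close> unfolding hyp_H_def a_b_c_d_def by auto
  have a_ge: "a \<ge> K0"
    using H2 nonneg \<open>0 < \<alpha>\<close> by (smt (verit) mult_nonneg_nonneg)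
  have b: "b \<le> \<alpha> * a" and c: "c \<le> \<alpha> * a"
    using H1 H3 nonneg \<open>0 < \<alpha>\<close> by (smt (verit) mult_nonneg_nonneg zero_le_power)+
  have "K0 * (a * d - b * c) \<le> K0 * jac L"
    using abs_diag_minus_abs_offdiag_le_jac[of L] \<open>K0 > 1\<close> unfolding a_b_c_d_def by simp
  also have "\<dots> \<le> a"
    using H4 nonneg \<open>0 < \<alpha>\<close> by (smt (verit) mult.commute mult_nonneg_nonneg)
  finally have "d / a \<le> 1 / K0^2 + \<alpha>^2"
    using diag_ratio_le_of_det_bound \<open>K0 > 1\<close> a_ge nonneg b c by blast
  moreover have "a > 0" using a_ge \<open>K0 > 1\<close> by linarith
  ultimately show ?thesis
    using b c unfolding a_b_c_d_def by (simp add: divide_le_eq mult.commute)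
qed

theorem lemma4p1:
  fixes \<alpha> K0 :: real
    and E S U :: "nat \<Rightarrow> (real \<times> real) set"
    and f :: "nat \<Rightarrow> real \<times> real \<Rightarrow> real \<times> real"
    and Df :: "nat \<Rightarrow> real \<times> real \<Rightarrow> (real \<times> real) \<Rightarrow>\<^sub>L (real \<times> real)"
    and i :: nat and z :: "real \<times> real"
  assumes "0 < \<alpha>" "\<alpha> < 1" "K0 > 1"
    and rect: "\<And>j. j \<ge> 1 \<Longrightarrow> curv_rect \<alpha> (E j)"
    and near: "\<And>j. j \<ge> 1 \<Longrightarrow> E j \<subseteq> U j"
    and diffeo: "\<And>j. j \<ge> 1 \<Longrightarrow> C2_diffeo_on (U j) (f j) (Df j)"
    and onto: "\<And>j. j \<ge> 1 \<Longrightarrow> f j ` E j = S j"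
    and strip: "\<And>j. j \<ge> 1 \<Longrightarrow> full_strip (S j)"
    and H: "\<And>j w. j \<ge> 1 \<Longrightarrow> w \<in> E j \<Longrightarrow> hyp_H \<alpha> K0 (Df j w)"
    and i: "i \<ge> 1" and z: "z \<in> E i"
  shows "\<bar>p1y (Df i z)\<bar> / \<bar>p1x (Df i z)\<bar> \<le> \<alpha> \<and>
         \<bar>p2x (Df i z)\<bar> / \<bar>p1x (Df i z)\<bar> \<le> \<alpha> \<and>
         \<bar>p2y (Df i z)\<bar> / \<bar>p1x (Df i z)\<bar> \<le> 1 / K0^2 + \<alpha>^2"
  using hyp_H_ratios[OF \<open>0 < \<alpha>\<close> \<open>K0 > 1\<close> H[OF i z]] .

end
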